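(* Let $m,n$ be positive integers and equip the special orthogonal group $\mathrm{SO}(m+n)$ with the bi-invariant Riemannian metric given on its Lie algebra $\mathfrak{so}(m+n)$ by $g(X,Y)=\operatorname{trace}(X^tY)$. For $x\in\mathrm{SO}(m+n)$ let $x_{ij}$ denote its matrix entries, and for $1\le j,\alpha\le m+n$ define $\hat\phi_{j\alpha}:\mathrm{SO}(m+n)\to\mathbb{R}$ by $$\hat\phi_{j\alpha}(x)=\sum_{t=1}^{m}x_{jt}\,x_{\alpha t}.$$ Then for all $1\le j,k,\alpha,\beta\le m+n$, the tension field $\hat\tau$ and the conformality operator $\hat\kappa$ on $\mathrm{SO}(m+n)$ satisfy $$\hat\tau(\hat\phi_{j\alpha})=-(m+n)\,\hat\phi_{j\alpha}+\delta_{j\alpha}\, m,$$ $$\hat\kappa(\hat\phi_{j\alpha},\hat\phi_{k\beta})=-\big(\hat\phi_{j\beta}\,\hat\phi_{k\alpha}+\hat\phi_{jk}\,\hat\phi_{\alpha\beta}\big)+\tfrac12\big(\delta_{jk}\,\hat\phi_{\alpha\beta}+\delta_{\alpha\beta}\,\hat\phi_{jk}+\delta_{j\beta}\,\hat\phi_{k\alpha}+\delta_{k\alpha}\,\hat\phi_{j\beta}\big).$$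
   Context: For a Riemannian manifold $(M,g)$, extend $g$ complex-bilinearly to the complexified tangent bundle. The tension field (Laplace–Beltrami operator) acts on complex-valued functions by $\tau(\phi)=\operatorname{div}(\nabla\phi)$, locally $\tau(\phi)=\sum_{i,j}\frac{1}{\sqrt{|g|}}\partial_{x_j}\big(g^{ij}\sqrt{|g|}\,\partial_{x_i}\phi\big)$, and the conformality operator is the complex-bilinear form $\kappa(\phi,\psi)=g(\nabla\phi,\nabla\psi)=\sum_{i,j}g^{ij}\partial_{x_i}\phi\,\partial_{x_j}\psi$. $\delta$ denotes the Kronecker delta. *)

theory Defs
  imports "HOL-Analysis.Analysis"
begin

text \<open>Real N x N matrices are represented as functions nat => nat => real;
  only entries with indices below N are meaningful (0-based indexing).\<close>

type_synonym rmat = "nat \<Rightarrow> nat \<Rightarrow> real"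

definition mmult :: "nat \<Rightarrow> rmat \<Rightarrow> rmat \<Rightarrow> rmat" where
  "mmult N A B = (\<lambda>i j. \<Sum>k<N. A i k * B k j)"

definition mid :: rmat where
  "mid = (\<lambda>i j. if i = j then 1 else 0)"

definition mtrans :: "rmat \<Rightarrow> rmat" where
  "mtrans A = (\<lambda>i j. A j i)"

fun mpow :: "nat \<Rightarrow> rmat \<Rightarrow> nat \<Rightarrow> rmat" where
  "mpow N A 0 = mid"
| "mpow N A (Suc k) = mmult N (mpow N A k) A"

definition mexp :: "nat \<Rightarrow> rmat \<Rightarrow> rmat" where
  "mexp N A = (\<lambda>i j. \<Sum>k. mpow N A k i j / fact k)"

definition mdet :: "nat \<Rightarrow> rmat \<Rightarrow> real" where
  "mdet N A = (\<Sum>p\<in>{p. p permutes {..<N}}. of_int (sign p) * (\<Prod>i<N. A i (p i)))"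

definition SO :: "nat \<Rightarrow> rmat set" where
  "SO N = {x. (\<forall>i j. (N \<le> i \<or> N \<le> j) \<longrightarrow> x i j = 0)
              \<and> (\<forall>i<N. \<forall>j<N. mmult N (mtrans x) x i j = mid i j)
              \<and> mdet N x = 1}"

text \<open>Orthonormal basis of so(N) w.r.t. g(X,Y) = trace(X^t Y):
  Y_rs = (E_rs - E_sr)/sqrt 2 for r < s < N.\<close>
definition soBasis :: "nat \<Rightarrow> nat \<Rightarrow> rmat" where
  "soBasis r s = (\<lambda>i j. (if i = r \<and> j = s then 1 else if i = s \<and> j = r then -1 else 0) / sqrt 2)"

definition soIdx :: "nat \<Rightarrow> (nat \<times> nat) set" where
  "soIdx N = {(r, s). r < s \<and> s < N}"

text \<open>Curve t |-> x exp(t Y) through x along the left-invariant field generated by Y.\<close>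
definition lcurve :: "nat \<Rightarrow> rmat \<Rightarrow> rmat \<Rightarrow> real \<Rightarrow> rmat" where
  "lcurve N x Y t = mmult N x (mexp N (\<lambda>i j. t * Y i j))"

text \<open>Tension field (Laplace-Beltrami operator) on SO(N) with the bi-invariant metric
  g(X,Y) = trace(X^t Y): tau(phi) = sum over an orthonormal basis {Y} of so(N) of Y^2(phi),
  where Y acts as the left-invariant vector field.\<close>
definition tensionSO :: "nat \<Rightarrow> (rmat \<Rightarrow> real) \<Rightarrow> rmat \<Rightarrow> real" where
  "tensionSO N \<phi> x = (\<Sum>(r,s)\<in>soIdx N. deriv (deriv (\<lambda>t. \<phi> (lcurve N x (soBasis r s) t))) 0)"

text \<open>Conformality operator kappa(phi,psi) = g(grad phi, grad psi) = sum_Y Y(phi) Y(psi).\<close>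
definition kappaSO :: "nat \<Rightarrow> (rmat \<Rightarrow> real) \<Rightarrow> (rmat \<Rightarrow> real) \<Rightarrow> rmat \<Rightarrow> real" where
  "kappaSO N \<phi> \<psi> x = (\<Sum>(r,s)\<in>soIdx N.
       deriv (\<lambda>t. \<phi> (lcurve N x (soBasis r s) t)) 0 * deriv (\<lambda>t. \<psi> (lcurve N x (soBasis r s) t)) 0)"

text \<open>hat phi_{j alpha}(x) = sum_{t=1}^m x_{jt} x_{alpha t}  (0-based here).\<close>
definition phiHat :: "nat \<Rightarrow> nat \<Rightarrow> nat \<Rightarrow> rmat \<Rightarrow> real" where
  "phiHat m j a x = (\<Sum>t<m. x j t * x a t)"

definition kdelta :: "nat \<Rightarrow> nat \<Rightarrow> real" where
  "kdelta i j = (if i = j then 1 else 0)"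

end

theory Submission
  imports Defs "Jordan_Normal_Form.Determinant"
begin

(* Each orthonormal basis element Y = (E_rs - E_sr)/sqrt 2 of so(N) satisfies Y^3 = -Y/2, so
   Rodrigues' formula gives exp(tY) = I + sqrt 2 sin(t/sqrt 2) Y + 2 (1 - cos(t/sqrt 2)) Y^2, and the
   derivatives of phi_ja along t |-> x exp(tY) at t = 0 are explicit:
   Y(phi_ja) = (P_s - P_r)(x_jr x_as + x_js x_ar)/sqrt 2 and
   Y^2(phi_ja) = (P_r - P_s)(x_js x_as - x_jr x_ar), where P is the indicator of the first m columns.
   Both expressions are symmetric in r, s, so summing over r < s is half a full double sum, which
   separates into products of the sums over l of x_il x_i'l (= delta, rows of x being orthonormal)
   and of P_l x_il x_i'l (= phi_ii'). *)

(* x^T x = I gives x x^T = I: a one-sided inverse of a square matrix is two-sided. *)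
lemma rows_orthonormal_if_columns_orthonormal:
  assumes "\<forall>i<N. \<forall>j<N. mmult N (mtrans x) x i j = mid i j" "i < N" "j < N"
  shows "(\<Sum>k<N. x i k * x j k) = kdelta i j"
proof -
  define A where "A = mat N N (\<lambda>(i,j). x j i)"
  define B where "B = mat N N (\<lambda>(i,j). x i j)"
  have AB: "A * B = 1\<^sub>m N"
  proof (rule eq_matI)
    fix i j assume "i < dim_row (1\<^sub>m N)" "j < dim_col (1\<^sub>m N)"
    then have ij: "i < N" "j < N" by auto
    have "(A * B) $$ (i,j) = mmult N (mtrans x) x i j"
      using ij by (simp add: A_def B_def mmult_def mtrans_def scalar_prod_def atLeast0LessThan)
    then show "(A * B) $$ (i,j) = 1\<^sub>m N $$ (i,j)" using assms(1) ij by (simp add: mid_def)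
  qed (auto simp: A_def B_def)
  have "B * A = 1\<^sub>m N"
    by (rule mat_mult_left_right_inverse[OF _ _ AB]) (auto simp: A_def B_def)
  then have "(B * A) $$ (i,j) = 1\<^sub>m N $$ (i,j)" by simp
  then show ?thesis using assms(2,3)
    by (simp add: A_def B_def kdelta_def scalar_prod_def atLeast0LessThan)
qed

lemma sum_two_points:
  fixes f :: "nat \<Rightarrow> real"
  assumes "r \<noteq> s" "\<And>l. l \<noteq> r \<Longrightarrow> l \<noteq> s \<Longrightarrow> f l = 0"
  shows "(\<Sum>l<m. f l) = of_bool (r < m) * f r + of_bool (s < m) * f s"
proof -
  have "(\<Sum>l<m. f l) = (\<Sum>l<m. (if l = r then f r else 0) + (if l = s then f s else 0))"
    by (rule sum.cong[OF refl]) (use assms in auto)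
  then show ?thesis by (simp add: sum.distrib sum.delta)
qed

lemma mmult_mid_left:
  assumes "\<And>i j. N \<le> i \<Longrightarrow> Y i j = 0"
  shows "mmult N mid Y = Y"
proof (intro ext)
  fix i j
  show "mmult N mid Y i j = Y i j"
    using assms[of i j]
    by (cases "i < N") (auto simp: mmult_def mid_def if_distrib[where f="\<lambda>u. u * _"] cong: if_cong)
qed

lemma soBasis_sq:
  assumes "r < s" "s < N"
  shows "mmult N (soBasis r s) (soBasis r s)
           = (\<lambda>i j. if i = j \<and> (i = r \<or> i = s) then -1/2 else 0)"
proof (intro ext)
  fix i j
  show "mmult N (soBasis r s) (soBasis r s) i j = (if i = j \<and> (i = r \<or> i = s) then -1/2 else 0)"
    unfolding mmult_def using assms
    by (subst sum_two_points[of r s]) (auto simp: soBasis_def)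
qed

lemma soBasis_cube:
  assumes "r < s" "s < N"
  shows "mmult N (mmult N (soBasis r s) (soBasis r s)) (soBasis r s)
           = (\<lambda>i j. -1/2 * soBasis r s i j)"
proof (intro ext)
  fix i j
  show "mmult N (mmult N (soBasis r s) (soBasis r s)) (soBasis r s) i j = -1/2 * soBasis r s i j"
    unfolding soBasis_sq[OF assms] unfolding mmult_def using assms
    by (subst sum_two_points[of r s]) (auto simp: soBasis_def)
qed

lemma mmult_mid_soBasis: "r < s \<Longrightarrow> s < N \<Longrightarrow> mmult N mid (soBasis r s) = soBasis r s"
  by (rule mmult_mid_left) (auto simp: soBasis_def)

lemma mmult_scale_left: "mmult N (\<lambda>i j. c * A i j) B = (\<lambda>i j. c * mmult N A B i j)"
  by (simp add: mmult_def sum_distrib_left mult_ac)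

lemma mpow_scale: "mpow N (\<lambda>i j. t * A i j) k = (\<lambda>i j. t ^ k * mpow N A k i j)"
  by (induction k) (simp_all add: mid_def mmult_def sum_distrib_left mult_ac)

lemma mpow_eq_if_cube:
  assumes cube: "mmult N (mmult N Y Y) Y = (\<lambda>i j. -1/2 * Y i j)"
    and unit: "mmult N mid Y = Y"
  shows "mpow N Y (2 * l + 1) = (\<lambda>i j. (-1/2) ^ l * Y i j)
       \<and> mpow N Y (2 * l + 2) = (\<lambda>i j. (-1/2) ^ l * mmult N Y Y i j)"
proof (induction l)
  case 0
  show ?case by (simp add: unit numeral_2_eq_2)
next
  case (Suc l)
  have odd_Suc: "2 * Suc l + 1 = Suc (2 * l + 2)"
    and even_Suc: "2 * Suc l + 2 = Suc (2 * Suc l + 1)"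
    by simp_all
  have odd: "mpow N Y (2 * Suc l + 1) = (\<lambda>i j. (-1/2) ^ Suc l * Y i j)"
    using Suc unfolding odd_Suc mpow.simps(2) by (simp add: mmult_scale_left cube)
  moreover have "mpow N Y (2 * Suc l + 2) = (\<lambda>i j. (-1/2) ^ Suc l * mmult N Y Y i j)"
    unfolding even_Suc mpow.simps(2) odd mmult_scale_left ..
  ultimately show ?case ..
qed

definition rodrigues_sin :: "real \<Rightarrow> real" where
  "rodrigues_sin t = sqrt 2 * sin (t / sqrt 2)"

definition rodrigues_vers :: "real \<Rightarrow> real" where
  "rodrigues_vers t = 2 * (1 - cos (t / sqrt 2))"

lemma mexp_term_eq_if_cube:
  assumes cube: "mmult N (mmult N Y Y) Y = (\<lambda>i j. -1/2 * Y i j)"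
    and unit: "mmult N mid Y = Y"
  shows "mpow N (\<lambda>i j. t * Y i j) k i j / fact k =
     of_bool (k = 0) * mid i j + Y i j * (sqrt 2 * (sin_coeff k * (t / sqrt 2) ^ k))
     + mmult N Y Y i j * (2 * (of_bool (k = 0) - cos_coeff k * (t / sqrt 2) ^ k))"
proof -
  note pow = mpow_eq_if_cube[OF cube unit]
  have half_pow: "(- (1/2) :: real) ^ l = (-1) ^ l / 2 ^ l" for l
    by (metis minus_divide_left power_divide)
  have "k = 0 \<or> (\<exists>l. k = 2 * l + 1) \<or> (\<exists>l. k = 2 * l + 2)" by presburger
  then consider "k = 0" | l where "k = 2 * l + 1" | l where "k = 2 * l + 2" by blast
  then show ?thesis
  proof cases
    case 1
    then show ?thesis by simp
  next
    case 2
    have p: "mpow N Y k i j = (-1/2) ^ l * Y i j" by (simp only: 2 conjunct1[OF pow])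
    have "sqrt 2 ^ k = 2 ^ l * sqrt 2"
      unfolding 2 by (simp add: power_add power_mult)
    moreover have "sin_coeff k = (-1) ^ l / fact k" "cos_coeff k = 0" "k \<noteq> 0"
      using 2 by (simp_all add: sin_coeff_def cos_coeff_def)
    ultimately show ?thesis
      unfolding mpow_scale p by (simp add: power_divide half_pow field_simps)
  next
    case 3
    have p: "mpow N Y k i j = (-1/2) ^ l * mmult N Y Y i j" by (simp only: 3 conjunct2[OF pow])
    have "sqrt 2 ^ k = 2 * 2 ^ l"
      unfolding 3 by (simp add: power_add power_mult)
    moreover have "cos_coeff k = (-1) ^ (l + 1) / fact k" "sin_coeff k = 0" "k \<noteq> 0"
      using 3 by (simp_all add: sin_coeff_def cos_coeff_def)
    ultimately show ?thesis
      unfolding mpow_scale p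
      by (simp add: power_divide half_pow field_simps) (simp add: mult.assoc[symmetric])
  qed
qed

lemma mexp_eq_rodrigues:
  assumes cube: "mmult N (mmult N Y Y) Y = (\<lambda>i j. -1/2 * Y i j)"
    and unit: "mmult N mid Y = Y"
  shows "mexp N (\<lambda>i j. t * Y i j) i j
           = mid i j + rodrigues_sin t * Y i j + rodrigues_vers t * mmult N Y Y i j"
proof -
  have delta: "(\<lambda>k. of_bool (k = 0) * c) sums c" for c :: real
  proof -
    have "(\<lambda>k::nat. of_bool (k = 0) * c) = (\<lambda>k. if k = 0 then c else 0)" by auto
    with sums_single[of 0 "\<lambda>_. c"] show ?thesis by simp
  qed
  have "(\<lambda>k. sin_coeff k * (t / sqrt 2) ^ k) sums sin (t / sqrt 2)"
    using sin_converges[of "t / sqrt 2"] by simp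
  then have sin: "(\<lambda>k. Y i j * (sqrt 2 * (sin_coeff k * (t / sqrt 2) ^ k)))
                    sums (Y i j * rodrigues_sin t)"
    unfolding rodrigues_sin_def by (intro sums_mult)
  have "(\<lambda>k. cos_coeff k * (t / sqrt 2) ^ k) sums cos (t / sqrt 2)"
    using cos_converges[of "t / sqrt 2"] by simp
  then have vers: "(\<lambda>k. mmult N Y Y i j * (2 * (of_bool (k = 0) - cos_coeff k * (t / sqrt 2) ^ k)))
                     sums (mmult N Y Y i j * rodrigues_vers t)"
    unfolding rodrigues_vers_def using delta[of 1] by (intro sums_mult sums_diff) simp_all
  have "(\<lambda>k. mpow N (\<lambda>i j. t * Y i j) k i j / fact k)
          sums (mid i j + Y i j * rodrigues_sin t + mmult N Y Y i j * rodrigues_vers t)"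
    unfolding mexp_term_eq_if_cube[OF cube unit]
    using delta[of "mid i j"] by (intro sums_add sin vers) (simp add: mult.commute)
  then show ?thesis
    unfolding mexp_def by (simp add: sums_iff mult_ac)
qed

definition rodrigues_comb :: "real \<Rightarrow> real \<Rightarrow> real \<Rightarrow> real \<Rightarrow> real" where
  "rodrigues_comb p q w t = p + rodrigues_sin t * q + rodrigues_vers t * w"

lemma rodrigues_comb_0 [simp]: "rodrigues_comb p q w 0 = p"
  by (simp add: rodrigues_comb_def rodrigues_sin_def rodrigues_vers_def)

(* The family is closed under differentiation, since rodrigues_sin' = 1 - rodrigues_vers / 2 and
   rodrigues_vers' = rodrigues_sin. *)
lemma has_real_derivative_rodrigues_comb:
  "(rodrigues_comb p q w has_real_derivative rodrigues_comb q w (- q / 2) t) (at t)"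
proof -
  have "(rodrigues_sin has_real_derivative cos (t / sqrt 2)) (at t)"
    unfolding rodrigues_sin_def by (auto intro!: derivative_eq_intros)
  moreover have "(rodrigues_vers has_real_derivative rodrigues_sin t) (at t)"
    unfolding rodrigues_vers_def rodrigues_sin_def
    by (auto intro!: derivative_eq_intros simp: real_div_sqrt)
  ultimately have "(rodrigues_comb p q w has_real_derivative
                      cos (t / sqrt 2) * q + rodrigues_sin t * w) (at t)"
    unfolding rodrigues_comb_def by (auto intro!: derivative_eq_intros)
  then show ?thesis
    by (simp add: rodrigues_comb_def rodrigues_vers_def algebra_simps)
qed

lemma deriv_sum_rodrigues_comb_mult:
  fixes p q w p' q' w' :: "'a \<Rightarrow> real" and L :: "'a set"
  defines "h \<equiv> \<lambda>t. \<Sum>l\<in>L.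
             rodrigues_comb (p l) (q l) (w l) t * rodrigues_comb (p' l) (q' l) (w' l) t"
  shows "deriv h 0 = (\<Sum>l\<in>L. p l * q' l + q l * p' l)"
    and "deriv (deriv h) 0 = (\<Sum>l\<in>L. p l * w' l + 2 * (q l * q' l) + w l * p' l)"
proof -
  note D = has_real_derivative_rodrigues_comb
  have "deriv h = (\<lambda>t. \<Sum>l\<in>L.
            rodrigues_comb (p l) (q l) (w l) t * rodrigues_comb (q' l) (w' l) (- q' l / 2) t
          + rodrigues_comb (q l) (w l) (- q l / 2) t * rodrigues_comb (p' l) (q' l) (w' l) t)"
    unfolding h_def by (intro ext DERIV_imp_deriv DERIV_sum DERIV_mult' D)
  then show "deriv h 0 = (\<Sum>l\<in>L. p l * q' l + q l * p' l)"
    by simp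
  moreover have "deriv (deriv h) 0 = (\<Sum>l\<in>L. p l * w' l + q l * q' l + (q l * q' l + w l * p' l))"
    unfolding \<open>deriv h = _\<close>
    by (intro DERIV_imp_deriv DERIV_sum DERIV_add DERIV_cong[OF DERIV_mult'[OF D D]]) simp_all
  ultimately show "deriv (deriv h) 0 = (\<Sum>l\<in>L. p l * w' l + 2 * (q l * q' l) + w l * p' l)"
    by (simp add: algebra_simps)
qed

lemma lcurve_eq_rodrigues_comb:
  assumes cube: "mmult N (mmult N Y Y) Y = (\<lambda>i j. -1/2 * Y i j)"
    and unit: "mmult N mid Y = Y" and "l < N"
  shows "lcurve N x Y t i l
           = rodrigues_comb (x i l) (mmult N x Y i l) (mmult N x (mmult N Y Y) i l) t"
proof -
  have "lcurve N x Y t i l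
          = (\<Sum>k<N. x i k * mid k l) + rodrigues_sin t * mmult N x Y i l
            + rodrigues_vers t * mmult N x (mmult N Y Y) i l"
    unfolding lcurve_def mmult_def mexp_eq_rodrigues[OF cube unit]
    by (simp add: algebra_simps sum.distrib sum_distrib_left)
  also have "(\<Sum>k<N. x i k * mid k l) = x i l"
    using \<open>l < N\<close> by (simp add: mid_def if_distrib[where f="\<lambda>u. _ * u"] cong: if_cong)
  finally show ?thesis
    unfolding rodrigues_comb_def .
qed

lemma deriv_phiHat_lcurve:
  assumes cube: "mmult N (mmult N Y Y) Y = (\<lambda>i j. -1/2 * Y i j)"
    and unit: "mmult N mid Y = Y" and "m \<le> N"
  shows "deriv (\<lambda>t. phiHat m j a (lcurve N x Y t)) 0
           = (\<Sum>l<m. x j l * mmult N x Y a l + mmult N x Y j l * x a l)" (is "_ = ?D1")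
    and "deriv (deriv (\<lambda>t. phiHat m j a (lcurve N x Y t))) 0
           = (\<Sum>l<m. x j l * mmult N x (mmult N Y Y) a l + 2 * (mmult N x Y j l * mmult N x Y a l)
                     + mmult N x (mmult N Y Y) j l * x a l)" (is "_ = ?D2")
proof -
  have "(\<lambda>t. phiHat m j a (lcurve N x Y t))
          = (\<lambda>t. \<Sum>l<m. rodrigues_comb (x j l) (mmult N x Y j l) (mmult N x (mmult N Y Y) j l) t
                       * rodrigues_comb (x a l) (mmult N x Y a l) (mmult N x (mmult N Y Y) a l) t)"
    unfolding phiHat_def using \<open>m \<le> N\<close>
    by (intro ext sum.cong refl) (simp add: lcurve_eq_rodrigues_comb[OF cube unit])
  then show "deriv (\<lambda>t. phiHat m j a (lcurve N x Y t)) 0 = ?D1"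
    and "deriv (deriv (\<lambda>t. phiHat m j a (lcurve N x Y t))) 0 = ?D2"
    by (simp_all only: deriv_sum_rodrigues_comb_mult)
qed

lemma mmult_soBasis_right:
  assumes "r < s" "s < N"
  shows "mmult N x (soBasis r s) i l = (of_bool (l = s) * x i r - of_bool (l = r) * x i s) / sqrt 2"
  unfolding mmult_def using assms
  by (subst sum_two_points[of r s]) (auto simp: soBasis_def)

lemma mmult_soBasis_sq_right:
  assumes "r < s" "s < N"
  shows "mmult N x (mmult N (soBasis r s) (soBasis r s)) i l
           = - of_bool (l = r \<or> l = s) * x i l / 2"
  unfolding soBasis_sq[OF assms] unfolding mmult_def using assms
  by (subst sum_two_points[of r s]) auto

lemma deriv_phiHat_lcurve_soBasis:
  assumes "r < s" "s < N" "m \<le> N"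
  shows "deriv (\<lambda>t. phiHat m j a (lcurve N x (soBasis r s) t)) 0
           = (of_bool (s < m) - of_bool (r < m)) * (x j r * x a s + x j s * x a r) / sqrt 2"
  unfolding deriv_phiHat_lcurve(1)
      [OF soBasis_cube[OF assms(1,2)] mmult_mid_soBasis[OF assms(1,2)] assms(3)]
  using assms by (subst sum_two_points[of r s]) (auto simp: mmult_soBasis_right field_simps)

lemma deriv2_phiHat_lcurve_soBasis:
  assumes "r < s" "s < N" "m \<le> N"
  shows "deriv (deriv (\<lambda>t. phiHat m j a (lcurve N x (soBasis r s) t))) 0
           = (of_bool (r < m) - of_bool (s < m)) * (x j s * x a s - x j r * x a r)"
  unfolding deriv_phiHat_lcurve(2)
      [OF soBasis_cube[OF assms(1,2)] mmult_mid_soBasis[OF assms(1,2)] assms(3)]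
  using assms by (subst sum_two_points[of r s]) (auto simp: mmult_soBasis_right mmult_soBasis_sq_right field_simps)

lemma sum_soIdx: "(\<Sum>(r, s)\<in>soIdx N. g r s) = (\<Sum>s<N. \<Sum>r<s. g r s)"
proof (induction N)
  case 0
  show ?case by (simp add: soIdx_def)
next
  case (Suc N)
  have "soIdx (Suc N) = soIdx N \<union> (\<lambda>r. (r, N)) ` {..<N}"
    and "soIdx N \<inter> (\<lambda>r. (r, N)) ` {..<N} = {}"
    by (auto simp: soIdx_def)
  moreover have "finite (soIdx N)"
    by (rule finite_subset[of _ "{..<N} \<times> {..<N}"]) (auto simp: soIdx_def)
  ultimately have "(\<Sum>(r, s)\<in>soIdx (Suc N). g r s)
                    = (\<Sum>(r, s)\<in>soIdx N. g r s) + (\<Sum>r<N. g r N)"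
    by (simp add: sum.union_disjoint sum.reindex inj_on_def)
  with Suc show ?case by simp
qed

lemma sum_soIdx_symmetric:
  fixes g :: "nat \<Rightarrow> nat \<Rightarrow> real"
  assumes "\<And>r s. g r s = g s r"
  shows "(\<Sum>(r, s)\<in>soIdx N. g r s) = ((\<Sum>r<N. \<Sum>s<N. g r s) - (\<Sum>r<N. g r r)) / 2"
proof -
  have "(\<Sum>s<N. \<Sum>r<s. g r s + g s r) = (\<Sum>r<N. \<Sum>s<N. g r s) - (\<Sum>r<N. g r r)"
    by (induction N) (simp_all add: sum.distrib algebra_simps)
  moreover have "g r s + g s r = 2 * g r s" for r s
    using assms[of s r] by simp
  then have "(\<Sum>s<N. \<Sum>r<s. g r s + g s r) = 2 * (\<Sum>s<N. \<Sum>r<s. g r s)"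
    by (simp only: sum_distrib_left)
  ultimately show ?thesis
    by (simp add: sum_soIdx)
qed

lemma sum_sum_diff_mult_diff:
  fixes P z :: "'a \<Rightarrow> real"
  shows "(\<Sum>r\<in>A. \<Sum>s\<in>A. (P r - P s) * (z s - z r))
           = 2 * ((\<Sum>r\<in>A. P r) * (\<Sum>s\<in>A. z s) - of_nat (card A) * (\<Sum>r\<in>A. P r * z r))"
  by (simp add: algebra_simps sum_subtractf sum.distrib sum_distrib_left sum_distrib_right
      sum.swap[of "\<lambda>r s. P s * z r"])

lemma sum_sum_sq_diff_mult:
  fixes P a b :: "'a \<Rightarrow> real"
  shows "(\<Sum>r\<in>A. \<Sum>s\<in>A. (P r - P s)\<^sup>2 * (a r * b s))
           = (\<Sum>r\<in>A. (P r)\<^sup>2 * a r) * (\<Sum>s\<in>A. b s) + (\<Sum>r\<in>A. a r) * (\<Sum>s\<in>A. (P s)\<^sup>2 * b s)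
             - 2 * ((\<Sum>r\<in>A. P r * a r) * (\<Sum>s\<in>A. P s * b s))"
proof -
  have "(\<Sum>r\<in>A. \<Sum>s\<in>A. (P r - P s)\<^sup>2 * (a r * b s))
          = (\<Sum>r\<in>A. \<Sum>s\<in>A. (P r)\<^sup>2 * a r * b s + a r * ((P s)\<^sup>2 * b s)
                                 - 2 * (P r * a r * (P s * b s)))"
    by (intro sum.cong refl) (simp add: power2_diff algebra_simps)
  then show ?thesis
    unfolding sum_product by (simp only: sum_subtractf sum.distrib sum_distrib_left mult.assoc)
qed

lemma sum_lessThan_of_bool_less_mult:
  fixes f :: "nat \<Rightarrow> real"
  assumes "m \<le> N"
  shows "(\<Sum>l<N. of_bool (l < m) * f l) = (\<Sum>l<m. f l)"
proof -
  have "{..<N} \<inter> {l. l < m} = {..<m}" using assms by auto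
  then show ?thesis by simp
qed

lemma tensionSO_phiHat:
  assumes "m \<le> N" "j < N" "a < N"
    and orth: "\<And>i i'. i < N \<Longrightarrow> i' < N \<Longrightarrow> (\<Sum>l<N. x i l * x i' l) = kdelta i i'"
  shows "tensionSO N (phiHat m j a) x = - real N * phiHat m j a x + kdelta j a * real m"
proof -
  define P :: "nat \<Rightarrow> real" where "P l = of_bool (l < m)" for l
  define z where "z l = x j l * x a l" for l
  have "tensionSO N (phiHat m j a) x = (\<Sum>(r, s)\<in>soIdx N. (P r - P s) * (z s - z r))"
    unfolding tensionSO_def using \<open>m \<le> N\<close>
    by (intro sum.cong refl) (auto simp: soIdx_def deriv2_phiHat_lcurve_soBasis P_def z_def)
  also have "\<dots> = (\<Sum>r<N. \<Sum>s<N. (P r - P s) * (z s - z r)) / 2"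
    by (subst sum_soIdx_symmetric) (simp_all add: algebra_simps)
  also have "\<dots> = (\<Sum>r<N. P r) * (\<Sum>s<N. z s) - real N * (\<Sum>r<N. P r * z r)"
    by (simp add: sum_sum_diff_mult_diff)
  also have "(\<Sum>r<N. P r) = real m"
    using sum_lessThan_of_bool_less_mult[OF \<open>m \<le> N\<close>, of "\<lambda>_. 1"] by (simp add: P_def)
  also have "(\<Sum>s<N. z s) = kdelta j a"
    using orth assms(2,3) by (simp add: z_def)
  also have "(\<Sum>r<N. P r * z r) = phiHat m j a x"
    unfolding P_def z_def phiHat_def by (rule sum_lessThan_of_bool_less_mult[OF \<open>m \<le> N\<close>])
  finally show ?thesis by simp
qed

lemma sum_sum_sq_diff_of_bool_rows:
  assumes "m \<le> N" "i < N" "i' < N" "k < N" "k' < N"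
    and orth: "\<And>i i'. i < N \<Longrightarrow> i' < N \<Longrightarrow> (\<Sum>l<N. x i l * x i' l) = kdelta i i'"
  shows "(\<Sum>r<N. \<Sum>s<N.
            (of_bool (r < m) - of_bool (s < m))\<^sup>2 * ((x i r * x i' r) * (x k s * x k' s)))
           = phiHat m i i' x * kdelta k k' + kdelta i i' * phiHat m k k' x
             - 2 * (phiHat m i i' x * phiHat m k k' x)"
proof -
  have "(of_bool b :: real)\<^sup>2 = of_bool b" for b by simp
  then show ?thesis
    unfolding sum_sum_sq_diff_mult phiHat_def
      sum_lessThan_of_bool_less_mult[OF \<open>m \<le> N\<close>, symmetric]
    using assms by (simp only: orth)
qed

lemma kappaSO_phiHat:
  assumes "m \<le> N" "j < N" "a < N" "k < N" "b < N"
    and orth: "\<And>i i'. i < N \<Longrightarrow> i' < N \<Longrightarrow> (\<Sum>l<N. x i l * x i' l) = kdelta i i'"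
  shows "kappaSO N (phiHat m j a) (phiHat m k b) x
      = - (phiHat m j b x * phiHat m k a x + phiHat m j k x * phiHat m a b x)
        + 1/2 * (kdelta j k * phiHat m a b x + kdelta a b * phiHat m j k x
                 + kdelta j b * phiHat m k a x + kdelta k a * phiHat m j b x)"
proof -
  define P :: "nat \<Rightarrow> real" where "P l = of_bool (l < m)" for l
  define c where "c i i' r s = x i r * x i' s + x i s * x i' r" for i i' r s
  have "kappaSO N (phiHat m j a) (phiHat m k b) x
          = (\<Sum>(r, s)\<in>soIdx N. (P r - P s)\<^sup>2 * (c j a r s * c k b r s) / 2)"
    unfolding kappaSO_def using \<open>m \<le> N\<close>
    by (intro sum.cong refl)
       (auto simp: soIdx_def deriv_phiHat_lcurve_soBasis P_def c_def power2_eq_square field_simps)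
  also have "\<dots> = (\<Sum>r<N. \<Sum>s<N. (P r - P s)\<^sup>2 * (c j a r s * c k b r s)) / 4"
    by (subst sum_soIdx_symmetric) (auto simp: c_def power2_commute algebra_simps sum_divide_distrib)
  also have "(\<Sum>r<N. \<Sum>s<N. (P r - P s)\<^sup>2 * (c j a r s * c k b r s))
      = (\<Sum>r<N. \<Sum>s<N. (P r - P s)\<^sup>2 * ((x j r * x k r) * (x a s * x b s)))
      + (\<Sum>r<N. \<Sum>s<N. (P r - P s)\<^sup>2 * ((x j r * x b r) * (x k s * x a s)))
      + (\<Sum>r<N. \<Sum>s<N. (P r - P s)\<^sup>2 * ((x k r * x a r) * (x j s * x b s)))
      + (\<Sum>r<N. \<Sum>s<N. (P r - P s)\<^sup>2 * ((x a r * x b r) * (x j s * x k s)))"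
    by (simp add: c_def sum.distrib algebra_simps)
  finally show ?thesis
    unfolding P_def using assms
    by (simp only: sum_sum_sq_diff_of_bool_rows) (simp add: field_simps)
qed

theorem lemma3p2:
  fixes m n :: nat
  assumes "0 < m" and "0 < n"
  shows "\<forall>x\<in>SO (m + n). \<forall>j<m+n. \<forall>k<m+n. \<forall>a<m+n. \<forall>b<m+n.
    tensionSO (m + n) (phiHat m j a) x
      = - real (m + n) * phiHat m j a x + kdelta j a * real m
  \<and> kappaSO (m + n) (phiHat m j a) (phiHat m k b) x
      = - (phiHat m j b x * phiHat m k a x + phiHat m j k x * phiHat m a b x)
        + 1/2 * (kdelta j k * phiHat m a b x + kdelta a b * phiHat m j k x
                 + kdelta j b * phiHat m k a x + kdelta k a * phiHat m j b x)"
proof (intro ballI allI impI conjI)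
  (* the identities hold for all m and n *)
  fix x j k a b
  assume "x \<in> SO (m + n)" and idx: "j < m + n" "k < m + n" "a < m + n" "b < m + n"
  then have orth: "(\<Sum>l<m + n. x i l * x i' l) = kdelta i i'" if "i < m + n" "i' < m + n" for i i'
    using rows_orthonormal_if_columns_orthonormal that unfolding SO_def by blast
  show "tensionSO (m + n) (phiHat m j a) x = - real (m + n) * phiHat m j a x + kdelta j a * real m"
    using tensionSO_phiHat[OF le_add1 idx(1,3) orth] .
  show "kappaSO (m + n) (phiHat m j a) (phiHat m k b) x
      = - (phiHat m j b x * phiHat m k a x + phiHat m j k x * phiHat m a b x)
        + 1/2 * (kdelta j k * phiHat m a b x + kdelta a b * phiHat m j k x
                 + kdelta j b * phiHat m k a x + kdelta k a * phiHat m j b x)"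
    using kappaSO_phiHat[OF le_add1 idx(1,3,2,4) orth] .
qed

end
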